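(* Let $D$ be a contractive distance, convex in each argument, such that for every state the infimum defining $E_D$ is attained by some separable state. Then for every state $\rho$ and every $0\le\epsilon\le E_D(\rho)$, $$(E_D)^{(D)}_\epsilon(\rho)=E_D(\rho)-\epsilon,$$ where $(E_D)^{(D)}_\epsilon$ is the $\epsilon$-measure of $E_D$ taken with respect to the same distance $D$.
   Context: $\mathcal H$ is a finite-dimensional multipartite Hilbert space, $\mathcal D(\mathcal H)$ its density matrices, $\mathcal S$ the separable states (convex combinations of product states). A distance $D$ is a metric on density matrices; convex in each argument means $D(p\rho_1+(1-p)\rho_2,\sigma)\le pD(\rho_1,\sigma)+(1-p)D(\rho_2,\sigma)$; contractive means $D(\Lambda[\rho],\Lambda[\sigma])\le D(\rho,\sigma)$ for every CPT map $\Lambda$. $E_D(\rho)=\inf_{\sigma\in\mathcal S}D(\rho,\sigma)$. For a function $F$ on states and $\epsilon\ge0$, $F^{(D)}_\epsilon(\rho)=\inf\{F(\sigma)\mid \sigma\in\mathcal D(\mathcal H),\ D(\rho,\sigma)\le\epsilon\}$. *)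

theory Defs
  imports Complex_Main "Jordan_Normal_Form.Matrix"
begin

text \<open>Finite-dimensional multipartite Hilbert space H = C^{d_1} (x) ... (x) C^{d_N},
  given by the list of local dimensions; operators on H are complex n x n matrices
  with n = prod_list dims.\<close>

definition mtrace :: "complex mat \<Rightarrow> complex" where
  "mtrace A = (\<Sum>i<dim_row A. A $$ (i, i))"

definition psd :: "nat \<Rightarrow> complex mat \<Rightarrow> bool" where
  "psd n A \<longleftrightarrow> A \<in> carrier_mat n n \<and>
     (\<forall>v :: nat \<Rightarrow> complex.
        let q = (\<Sum>i<n. \<Sum>j<n. cnj (v i) * A $$ (i, j) * v j) in Im q = 0 \<and> Re q \<ge> 0)"

definition density :: "nat \<Rightarrow> complex mat \<Rightarrow> bool" where
  "density n \<rho> \<longleftrightarrow> psd n \<rho> \<and> mtrace \<rho> = 1"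

definition kron :: "complex mat \<Rightarrow> complex mat \<Rightarrow> complex mat" where
  "kron A B = mat (dim_row A * dim_row B) (dim_col A * dim_col B)
     (\<lambda>(i, j). A $$ (i div dim_row B, j div dim_col B) * B $$ (i mod dim_row B, j mod dim_col B))"

definition hdim :: "nat list \<Rightarrow> nat" where
  "hdim dims = prod_list dims"

definition product_state :: "nat list \<Rightarrow> complex mat \<Rightarrow> bool" where
  "product_state dims \<rho> \<longleftrightarrow>
     (\<exists>\<rho>s. length \<rho>s = length dims \<and> (\<forall>k<length dims. density (dims ! k) (\<rho>s ! k)) \<and>
           \<rho> = foldr kron \<rho>s (1\<^sub>m 1))"

definition separable :: "nat list \<Rightarrow> complex mat \<Rightarrow> bool" where
  "separable dims \<rho> \<longleftrightarrow>
     (\<exists>(m::nat) (p :: nat \<Rightarrow> real) (\<sigma> :: nat \<Rightarrow> complex mat).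
        (\<forall>i<m. p i \<ge> 0 \<and> product_state dims (\<sigma> i)) \<and> (\<Sum>i<m. p i) = 1 \<and>
        \<rho> = mat (hdim dims) (hdim dims) (\<lambda>(a, b). \<Sum>i<m. complex_of_real (p i) * \<sigma> i $$ (a, b)))"

definition mix :: "real \<Rightarrow> complex mat \<Rightarrow> complex mat \<Rightarrow> complex mat" where
  "mix p A B = complex_of_real p \<cdot>\<^sub>m A + complex_of_real (1 - p) \<cdot>\<^sub>m B"

text \<open>(id_k (x) Lambda) applied to a (k n) x (k n) matrix, viewed as a k x k block
  matrix with n x n blocks.\<close>
definition ampliate :: "nat \<Rightarrow> nat \<Rightarrow> (complex mat \<Rightarrow> complex mat) \<Rightarrow> complex mat \<Rightarrow> complex mat" where
  "ampliate n k \<Lambda> X = mat (k * n) (k * n)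
     (\<lambda>(a, b). \<Lambda> (mat n n (\<lambda>(i, j). X $$ (a div n * n + i, b div n * n + j))) $$ (a mod n, b mod n))"

definition CPT :: "nat \<Rightarrow> (complex mat \<Rightarrow> complex mat) \<Rightarrow> bool" where
  "CPT n \<Lambda> \<longleftrightarrow>
     (\<forall>A \<in> carrier_mat n n. \<Lambda> A \<in> carrier_mat n n \<and> mtrace (\<Lambda> A) = mtrace A) \<and>
     (\<forall>A \<in> carrier_mat n n. \<forall>B \<in> carrier_mat n n. \<Lambda> (A + B) = \<Lambda> A + \<Lambda> B) \<and>
     (\<forall>A \<in> carrier_mat n n. \<forall>c. \<Lambda> (c \<cdot>\<^sub>m A) = c \<cdot>\<^sub>m \<Lambda> A) \<and>
     (\<forall>k X. psd (k * n) X \<longrightarrow> psd (k * n) (ampliate n k \<Lambda> X))"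

definition metric_on_states :: "nat \<Rightarrow> (complex mat \<Rightarrow> complex mat \<Rightarrow> real) \<Rightarrow> bool" where
  "metric_on_states n D \<longleftrightarrow>
     (\<forall>\<rho> \<sigma>. density n \<rho> \<longrightarrow> density n \<sigma> \<longrightarrow> (D \<rho> \<sigma> = 0 \<longleftrightarrow> \<rho> = \<sigma>) \<and> D \<rho> \<sigma> = D \<sigma> \<rho>) \<and>
     (\<forall>\<rho> \<sigma> \<tau>. density n \<rho> \<longrightarrow> density n \<sigma> \<longrightarrow> density n \<tau> \<longrightarrow> D \<rho> \<tau> \<le> D \<rho> \<sigma> + D \<sigma> \<tau>)"

definition convex_each_arg :: "nat \<Rightarrow> (complex mat \<Rightarrow> complex mat \<Rightarrow> real) \<Rightarrow> bool" where
  "convex_each_arg n D \<longleftrightarrow>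
     (\<forall>p \<rho>1 \<rho>2 \<sigma>. 0 \<le> p \<longrightarrow> p \<le> 1 \<longrightarrow> density n \<rho>1 \<longrightarrow> density n \<rho>2 \<longrightarrow> density n \<sigma> \<longrightarrow>
        D (mix p \<rho>1 \<rho>2) \<sigma> \<le> p * D \<rho>1 \<sigma> + (1 - p) * D \<rho>2 \<sigma> \<and>
        D \<sigma> (mix p \<rho>1 \<rho>2) \<le> p * D \<sigma> \<rho>1 + (1 - p) * D \<sigma> \<rho>2)"

definition contractive :: "nat \<Rightarrow> (complex mat \<Rightarrow> complex mat \<Rightarrow> real) \<Rightarrow> bool" where
  "contractive n D \<longleftrightarrow>
     (\<forall>\<Lambda> \<rho> \<sigma>. CPT n \<Lambda> \<longrightarrow> density n \<rho> \<longrightarrow> density n \<sigma> \<longrightarrow> D (\<Lambda> \<rho>) (\<Lambda> \<sigma>) \<le> D \<rho> \<sigma>)"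

definition E_D :: "nat list \<Rightarrow> (complex mat \<Rightarrow> complex mat \<Rightarrow> real) \<Rightarrow> complex mat \<Rightarrow> real" where
  "E_D dims D \<rho> = Inf {D \<rho> \<sigma> | \<sigma>. separable dims \<sigma>}"

definition eps_measure :: "nat \<Rightarrow> (complex mat \<Rightarrow> complex mat \<Rightarrow> real) \<Rightarrow> (complex mat \<Rightarrow> real)
    \<Rightarrow> real \<Rightarrow> complex mat \<Rightarrow> real" where
  "eps_measure n D F \<epsilon> \<rho> = Inf {F \<sigma> | \<sigma>. density n \<sigma> \<and> D \<rho> \<sigma> \<le> \<epsilon>}"

end

theory Submission
  imports Defs
begin

(* For a metric D on states that is convex in each argument and whose
   infimum E_D is attained, the e-measure of E_D drops exactly by e:
   - Lower bound: if D(rho,sigma) <= e and s is a closest separable state to sigma,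
     then E_D(rho) <= D(rho,s) <= D(rho,sigma) + D(sigma,s) <= e + E_D(sigma).
   - Attainment: with s a closest separable state to rho and t = e / E_D(rho), the
     state (1-t) rho + t s is within t E_D(rho) = e of rho (convexity in the second
     argument) and within (1-t) E_D(rho) of s (convexity in the first argument).
   Both steps need separable states to be density matrices, which is the bulk of the
   file: positive semidefinite kernels admit a Gram factorisation (Cholesky-type
   induction via Schur complements), hence Kronecker products of positive
   semidefinite matrices are positive semidefinite, so product states are states,
   and states are closed under convex combinations. *)


(* Positive semidefinite kernels: matrices given by their entry function, which
   makes index arithmetic (Kronecker products, restrictions) convenient. *)

definition qform :: "nat \<Rightarrow> (nat \<Rightarrow> nat \<Rightarrow> complex) \<Rightarrow> (nat \<Rightarrow> complex) \<Rightarrow> complex" where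
  "qform n f v = (\<Sum>i<n. \<Sum>j<n. cnj (v i) * f i j * v j)"

definition psd_kernel :: "nat \<Rightarrow> (nat \<Rightarrow> nat \<Rightarrow> complex) \<Rightarrow> bool" where
  "psd_kernel n f \<longleftrightarrow> (\<forall>v. 0 \<le> qform n f v)"

(* The notion psd is exactly "square and positive semidefinite kernel",
   since 0 <= q in the complex order means Im q = 0 and Re q >= 0. *)
lemma psd_iff_kernel: "psd n A \<longleftrightarrow> A \<in> carrier_mat n n \<and> psd_kernel n (\<lambda>i j. A $$ (i, j))"
  unfolding psd_def psd_kernel_def qform_def Let_def less_eq_complex_def by auto

lemma qform_cong:
  assumes "\<And>k. k < n \<Longrightarrow> v k = w k"
  shows "qform n f v = qform n f w"
  unfolding qform_def using assms by (intro sum.cong) auto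

lemma psd_kernel_cong:
  assumes "\<And>i j. i < n \<Longrightarrow> j < n \<Longrightarrow> f i j = g i j"
  shows "psd_kernel n f = psd_kernel n g"
proof -
  have "qform n f v = qform n g v" for v unfolding qform_def using assms by (intro sum.cong) auto
  then show ?thesis unfolding psd_kernel_def by simp
qed

lemma qform_one_point:
  assumes "i < n"
  shows "qform n f (\<lambda>k. if k = i then s else 0) = cnj s * f i i * s"
proof -
  let ?v = "\<lambda>k. if k = i then s else 0"
  have "(\<Sum>b<n. cnj (?v a) * f a b * ?v b) = (\<Sum>b<n. if b = i then cnj (?v a) * f a b * s else 0)"
    for a by (rule sum.cong) auto
  then have "qform n f ?v = (\<Sum>a<n. if a = i then cnj s * f a i * s else 0)"
    unfolding qform_def using assms by (intro sum.cong) (auto simp: sum.delta)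
  then show ?thesis using assms by (simp add: sum.delta)
qed

lemma sum_two_points:
  fixes g h :: "nat \<Rightarrow> complex"
  assumes "i < n" "j < n" "i \<noteq> j"
  shows "(\<Sum>a<n. if a = i then g a else if a = j then h a else 0) = g i + h j"
proof -
  have "(\<Sum>a<n. if a = i then g a else if a = j then h a else 0) =
        (\<Sum>a<n. (if a = i then g a else 0) + (if a = j then h a else 0))"
    by (rule sum.cong) (use assms in auto)
  then show ?thesis using assms by (simp add: sum.distrib sum.delta)
qed

lemma qform_two_points:
  assumes "i < n" "j < n" "i \<noteq> j"
  shows "qform n f (\<lambda>k. if k = i then s else if k = j then t else 0) =
    cnj s * f i i * s + cnj s * f i j * t + cnj t * f j i * s + cnj t * f j j * t"
proof -
  let ?v = "\<lambda>k. if k = i then s else if k = j then t else 0"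
  have inner: "(\<Sum>b<n. cnj (?v a) * f a b * ?v b) = cnj (?v a) * f a i * s + cnj (?v a) * f a j * t"
    for a
  proof -
    have "(\<Sum>b<n. cnj (?v a) * f a b * ?v b) =
        (\<Sum>b<n. if b = i then cnj (?v a) * f a b * s else if b = j then cnj (?v a) * f a b * t else 0)"
      by (rule sum.cong) auto
    then show ?thesis using sum_two_points[OF assms] by simp
  qed
  have "qform n f ?v = (\<Sum>a<n. cnj (?v a) * f a i * s + cnj (?v a) * f a j * t)"
    unfolding qform_def using inner by simp
  also have "\<dots> = (\<Sum>a<n. if a = i then cnj s * f a i * s + cnj s * f a j * t
                     else if a = j then cnj t * f a i * s + cnj t * f a j * t else 0)"
    by (rule sum.cong) auto
  finally show ?thesis using sum_two_points[OF assms] by simp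
qed

lemma psd_kernel_diag:
  assumes "psd_kernel n f" "i < n"
  shows "0 \<le> f i i"
proof -
  have "0 \<le> qform n f (\<lambda>k. if k = i then 1 else 0)" using assms(1) unfolding psd_kernel_def ..
  then show ?thesis using qform_one_point[OF assms(2), of f 1] by simp
qed

(* Positive semidefinite kernels are Hermitian: test with e_i + e_j and e_i + i e_j. *)
lemma psd_kernel_hermitian:
  assumes "psd_kernel n f" "i < n" "j < n"
  shows "f j i = cnj (f i j)"
proof (cases "i = j")
  case True
  then show ?thesis using psd_kernel_diag[OF assms(1,2)]
    by (simp add: less_eq_complex_def complex_eq_iff)
next
  case False
  have diag: "Im (f i i) = 0" "Im (f j j) = 0"
    using psd_kernel_diag assms by (auto simp: less_eq_complex_def)
  have "0 \<le> qform n f (\<lambda>k. if k = i then 1 else if k = j then 1 else 0)"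
    using assms(1) unfolding psd_kernel_def by blast
  then have re_test: "0 \<le> f i i + f i j + f j i + f j j"
    using qform_two_points[OF assms(2,3) False, of f 1 1] by simp
  have "0 \<le> qform n f (\<lambda>k. if k = i then 1 else if k = j then \<i> else 0)"
    using assms(1) unfolding psd_kernel_def by blast
  then have im_test: "0 \<le> f i i + f i j * \<i> - \<i> * f j i + f j j"
    using qform_two_points[OF assms(2,3) False, of f 1 "\<i>"] by (simp add: algebra_simps)
  have "Im (f i j) + Im (f j i) = 0" using re_test diag by (simp add: less_eq_complex_def)
  moreover have "Re (f i j) - Re (f j i) = 0" using im_test diag by (simp add: less_eq_complex_def)
  ultimately show ?thesis by (simp add: complex_eq_iff)
qed

(* A zero diagonal entry forces its whole row to vanish: testing with
   -r conj(y) e_i + e_j for small r > 0 gives r |y|^2 (r f_ii - 2) >= 0. *)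
lemma psd_kernel_zero_row:
  assumes "psd_kernel n f" "i < n" "j < n" "f j j = 0"
  shows "f j i = 0"
proof (cases "i = j")
  case True then show ?thesis using assms by simp
next
  case False
  define y where "y = f j i"
  define c where "c = Re (f i i)"
  define r :: real where "r = 1 / (c + 1)"
  have c0: "c \<ge> 0" and fii: "f i i = of_real c"
    using psd_kernel_diag[OF assms(1,2)] by (auto simp: c_def less_eq_complex_def complex_eq_iff)
  have r0: "r > 0" and rc: "r * c < 1" using c0 by (simp_all add: r_def field_simps)
  have fij: "f i j = cnj y" using psd_kernel_hermitian[OF assms(1,3,2)] y_def by simp
  define s where "s = - of_real r * cnj y"
  have "0 \<le> qform n f (\<lambda>k. if k = i then s else if k = j then 1 else 0)"
    using assms(1) unfolding psd_kernel_def by blast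
  then have "0 \<le> cnj s * f i i * s + cnj s * f i j + f j i * s"
    using qform_two_points[OF assms(2,3) False, of f s 1] assms(4) by simp
  also have "cnj s * f i i * s + cnj s * f i j + f j i * s =
       of_real (r^2 * c * (Re y ^ 2 + Im y ^ 2) - 2 * r * (Re y ^ 2 + Im y ^ 2))"
    unfolding s_def fii fij y_def[symmetric]
    by (simp add: complex_eq_iff power2_eq_square algebra_simps)
  finally have "0 \<le> r * (Re y ^ 2 + Im y ^ 2) * (r * c - 2)"
    by (simp add: less_eq_complex_def power2_eq_square algebra_simps)
  with rc have "r * (Re y ^ 2 + Im y ^ 2) \<le> 0" by (simp add: zero_le_mult_iff)
  with r0 have "Re y ^ 2 + Im y ^ 2 \<le> 0" by (simp add: mult_le_0_iff)
  then have "Re y = 0 \<and> Im y = 0" by (smt (verit) zero_le_power2 power2_less_eq_zero_iff)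
  then show ?thesis by (simp add: y_def complex_eq_iff)
qed

lemma qform_Suc:
  "qform (Suc n) f v = qform n f v + (\<Sum>i<n. cnj (v i) * f i n) * v n
     + cnj (v n) * (\<Sum>j<n. f n j * v j) + cnj (v n) * f n n * v n"
  unfolding qform_def by (simp add: sum.distrib sum_distrib_left sum_distrib_right algebra_simps)

lemma psd_kernel_restrict:
  assumes "psd_kernel (Suc n) f"
  shows "psd_kernel n f"
  unfolding psd_kernel_def
proof
  fix v
  have "0 \<le> qform (Suc n) f (v(n := 0))" using assms unfolding psd_kernel_def by blast
  also have "qform (Suc n) f (v(n := 0)) = qform n f (v(n := 0))" by (simp add: qform_Suc)
  also have "\<dots> = qform n f v" by (rule qform_cong) auto
  finally show "0 \<le> qform n f v" .
qed

(* The Schur complement of a nonzero last diagonal entry is again positive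
   semidefinite: complete the square with v_n = -S / f_nn, S = sum_j f_nj v_j. *)
lemma psd_kernel_schur_complement:
  assumes "psd_kernel (Suc n) f" "f n n \<noteq> 0"
  shows "psd_kernel n (\<lambda>i j. f i j - f i n * f n j / f n n)"
  unfolding psd_kernel_def
proof
  fix v
  define a where "a = f n n"
  define S where "S = (\<Sum>j<n. f n j * v j)"
  have a_real: "cnj a = a" using psd_kernel_diag[OF assms(1), of n]
    by (simp add: a_def less_eq_complex_def complex_eq_iff)
  have a0: "a \<noteq> 0" using assms(2) a_def by simp
  have col: "(\<Sum>i<n. cnj (v i) * f i n) = cnj S"
  proof -
    have "(\<Sum>i<n. cnj (v i) * f i n) = (\<Sum>i<n. cnj (f n i * v i))"
      by (rule sum.cong) (auto simp: psd_kernel_hermitian[OF assms(1), of n] mult.commute)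
    then show ?thesis unfolding S_def by simp
  qed
  define w where "w = v(n := - (S / a))"
  have "0 \<le> qform (Suc n) f w" using assms unfolding psd_kernel_def by blast
  also have "qform (Suc n) f w = qform n f v + cnj S * (- (S / a)) + cnj (- (S / a)) * S
       + cnj (- (S / a)) * a * (- (S / a))"
  proof -
    have "qform n f w = qform n f v" by (rule qform_cong) (auto simp: w_def)
    moreover have "(\<Sum>i<n. cnj (w i) * f i n) = cnj S"
      unfolding col[symmetric] by (rule sum.cong) (auto simp: w_def)
    moreover have "(\<Sum>j<n. f n j * w j) = S"
      unfolding S_def by (rule sum.cong) (auto simp: w_def)
    ultimately show ?thesis unfolding qform_Suc by (simp add: w_def a_def)
  qed
  also have "\<dots> = qform n f v - cnj S * S / a"
    using a0 a_real by (simp add: field_simps)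
  also have "\<dots> = qform n (\<lambda>i j. f i j - f i n * f n j / f n n) v"
  proof -
    have "qform n (\<lambda>i j. f i j - f i n * f n j / f n n) v =
        qform n f v - (\<Sum>i<n. \<Sum>j<n. (cnj (v i) * f i n) * (f n j * v j)) / a"
      unfolding qform_def a_def by (simp add: sum_subtractf sum_divide_distrib algebra_simps)
    also have "(\<Sum>i<n. \<Sum>j<n. (cnj (v i) * f i n) * (f n j * v j)) =
        (\<Sum>i<n. cnj (v i) * f i n) * S"
      unfolding S_def by (simp add: sum_product)
    also have "\<dots> = cnj S * S" using col by simp
    finally show ?thesis by simp
  qed
  finally show "0 \<le> qform n (\<lambda>i j. f i j - f i n * f n j / f n n) v" .
qed


definition gram_kernel :: "nat \<Rightarrow> (nat \<Rightarrow> nat \<Rightarrow> complex) \<Rightarrow> bool" where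
  "gram_kernel n f \<longleftrightarrow> (\<exists>(m::nat) u. \<forall>i<n. \<forall>j<n. f i j = (\<Sum>k<m. cnj (u k i) * u k j))"

(* Extension step when the new row and column vanish: pad the factors with zeros. *)
lemma gram_kernel_extend_zero:
  assumes "gram_kernel n f" and "\<And>j. j < Suc n \<Longrightarrow> f n j = 0 \<and> f j n = 0"
  shows "gram_kernel (Suc n) f"
proof -
  obtain m :: nat and u where u: "\<forall>i<n. \<forall>j<n. f i j = (\<Sum>k<m. cnj (u k i) * u k j)"
    using assms(1) unfolding gram_kernel_def by blast
  define u' where "u' k j = (if j < n then u k j else 0)" for k j
  have "f i j = (\<Sum>k<m. cnj (u' k i) * u' k j)" if "i < Suc n" "j < Suc n" for i j
  proof (cases "i < n \<and> j < n")
    case True then show ?thesis using u by (simp add: u'_def)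
  next
    case False
    then have "i = n \<or> j = n" using that by auto
    then show ?thesis using assms(2) that by (auto simp: u'_def)
  qed
  then show ?thesis unfolding gram_kernel_def by blast
qed

(* Extension step through the Schur complement: append the factor f_nj / sqrt f_nn. *)
lemma gram_kernel_extend_schur:
  assumes gram: "gram_kernel n (\<lambda>i j. f i j - f i n * f n j / f n n)"
    and pos: "0 < f n n"
    and herm: "\<And>i. i < Suc n \<Longrightarrow> cnj (f n i) = f i n"
  shows "gram_kernel (Suc n) f"
proof -
  define a where "a = f n n"
  define r where "r = sqrt (Re a)"
  have a0: "a \<noteq> 0" using pos a_def by auto
  have r2: "of_real r * of_real r = a"
    using pos by (simp add: r_def a_def less_complex_def complex_eq_iff flip: of_real_mult)
  obtain m :: nat and u where u:
    "\<forall>i<n. \<forall>j<n. f i j - f i n * f n j / f n n = (\<Sum>k<m. cnj (u k i) * u k j)"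
    using gram unfolding gram_kernel_def by blast
  define u' where "u' k j = (if k < m then (if j < n then u k j else 0) else f n j / of_real r)"
    for k j
  have "f i j = (\<Sum>k<Suc m. cnj (u' k i) * u' k j)" if i: "i < Suc n" and j: "j < Suc n" for i j
  proof -
    have "cnj (u' m i) * u' m j = cnj (f n i) * f n j / (of_real r * of_real r)"
      by (simp add: u'_def)
    also have "\<dots> = f i n * f n j / a" using herm[OF i] r2 by simp
    finally have last: "cnj (u' m i) * u' m j = f i n * f n j / a" .
    have "(\<Sum>k<m. cnj (u' k i) * u' k j) =
        (if i < n \<and> j < n then (\<Sum>k<m. cnj (u k i) * u k j) else 0)"
      by (cases "i < n \<and> j < n") (auto simp: u'_def intro: sum.cong sum.neutral)
    then have "(\<Sum>k<Suc m. cnj (u' k i) * u' k j) =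
        (if i < n \<and> j < n then (\<Sum>k<m. cnj (u k i) * u k j) else 0) + f i n * f n j / a"
      using last by simp
    moreover have "(\<Sum>k<m. cnj (u k i) * u k j) = f i j - f i n * f n j / a"
      if "i < n" "j < n" using u that by (simp add: a_def)
    moreover have "i < n \<and> j < n \<or> i = n \<or> j = n" using i j by auto
    ultimately show ?thesis using a0 by (auto simp: a_def)
  qed
  then show ?thesis unfolding gram_kernel_def by blast
qed

(* Cholesky-type induction on the size: every positive semidefinite kernel is Gram. *)
lemma psd_kernel_gram: "psd_kernel n f \<Longrightarrow> gram_kernel n f"
proof (induction n arbitrary: f)
  case 0 then show ?case unfolding gram_kernel_def by auto
next
  case (Suc n f)
  have herm: "f j n = cnj (f n j)" if "j < Suc n" for j
    using psd_kernel_hermitian[OF Suc.prems, of n j] that by simp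
  show ?case
  proof (cases "f n n = 0")
    case True
    have "f n j = 0" if "j < Suc n" for j using psd_kernel_zero_row[OF Suc.prems that _ True] by simp
    with herm have "f n j = 0 \<and> f j n = 0" if "j < Suc n" for j using that by simp
    with Suc.IH[OF psd_kernel_restrict[OF Suc.prems]] show ?thesis
      by (rule gram_kernel_extend_zero)
  next
    case False
    have "0 < f n n" using False psd_kernel_diag[OF Suc.prems, of n] by (simp add: order_less_le)
    with Suc.IH[OF psd_kernel_schur_complement[OF Suc.prems False]] show ?thesis
      by (rule gram_kernel_extend_schur) (simp add: herm)
  qed
qed


(* Kronecker products of positive semidefinite kernels (Schur product theorem). *)

lemma sum_lessThan_mult:
  fixes g :: "nat \<Rightarrow> 'a::comm_monoid_add"
  shows "(\<Sum>i<n*k. g i) = (\<Sum>a<n. \<Sum>b<k. g (a*k+b))"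
proof -
  have "(\<Sum>i<n*k. g i) = (\<Sum>a<n. sum g {a*k..<a*k+k})" by (rule sum.nat_group[symmetric])
  also have "\<dots> = (\<Sum>a<n. \<Sum>b<k. g (a*k+b))"
    by (rule sum.cong[OF refl]) (simp add: sum.atLeastLessThan_shift_0 atLeast0LessThan comp_def)
  finally show ?thesis .
qed

lemma sum_rotate3:
  fixes X :: "nat \<Rightarrow> nat \<Rightarrow> nat \<Rightarrow> 'a::comm_monoid_add"
  shows "(\<Sum>b<n. \<Sum>d<p. \<Sum>k<m. X b d k) = (\<Sum>k<m. \<Sum>b<n. \<Sum>d<p. X b d k)"
proof -
  have "(\<Sum>b<n. \<Sum>d<p. \<Sum>k<m. X b d k) = (\<Sum>b<n. \<Sum>k<m. \<Sum>d<p. X b d k)"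
    by (rule sum.cong[OF refl], rule sum.swap)
  also have "\<dots> = (\<Sum>k<m. \<Sum>b<n. \<Sum>d<p. X b d k)" by (rule sum.swap)
  finally show ?thesis .
qed

lemma gram_sesquilinear:
  fixes u :: "nat \<Rightarrow> nat \<Rightarrow> complex" and n m :: nat
  assumes "\<forall>b<n. \<forall>d<n. B b d = (\<Sum>k<m. cnj (u k b) * u k d)"
  shows "(\<Sum>b<n. \<Sum>d<n. cnj (x b) * B b d * y d) =
         (\<Sum>k<m. cnj (\<Sum>b<n. u k b * x b) * (\<Sum>d<n. u k d * y d))"
proof -
  have "(\<Sum>b<n. \<Sum>d<n. cnj (x b) * B b d * y d) =
        (\<Sum>b<n. \<Sum>d<n. \<Sum>k<m. cnj (u k b) * cnj (x b) * (u k d * y d))"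
    using assms by (auto intro!: sum.cong simp: sum_distrib_left sum_distrib_right mult_ac)
  also have "\<dots> = (\<Sum>k<m. \<Sum>b<n. \<Sum>d<n. cnj (u k b) * cnj (x b) * (u k d * y d))"
    by (rule sum_rotate3)
  also have "\<dots> = (\<Sum>k<m. cnj (\<Sum>b<n. u k b * x b) * (\<Sum>d<n. u k d * y d))"
    by (simp add: sum_product)
  finally show ?thesis .
qed

(* Factor B via Gram; the form of A (x) B at v is then a sum of forms of A at the
   vectors w_k(a) = sum_b u_kb v(a n2 + b). *)
lemma psd_kernel_kron:
  assumes A: "psd_kernel n1 fA" and B: "psd_kernel n2 fB"
  shows "psd_kernel (n1*n2) (\<lambda>i j. fA (i div n2) (j div n2) * fB (i mod n2) (j mod n2))"
  unfolding psd_kernel_def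
proof
  fix v :: "nat \<Rightarrow> complex"
  obtain m :: nat and u where u: "\<forall>b<n2. \<forall>d<n2. fB b d = (\<Sum>k<m. cnj (u k b) * u k d)"
    using psd_kernel_gram[OF B] unfolding gram_kernel_def by blast
  define w where "w k a = (\<Sum>b<n2. u k b * v (a*n2+b))" for k a
  let ?K = "\<lambda>i j. fA (i div n2) (j div n2) * fB (i mod n2) (j mod n2)"
  have "qform (n1*n2) ?K v = (\<Sum>a<n1. \<Sum>b<n2. \<Sum>c<n1. \<Sum>d<n2.
          cnj (v (a*n2+b)) * (fA a c * fB b d) * v (c*n2+d))"
    unfolding qform_def sum_lessThan_mult by (intro sum.cong refl) auto
  also have "\<dots> = (\<Sum>a<n1. \<Sum>c<n1. fA a c * (\<Sum>b<n2. \<Sum>d<n2.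
          cnj (v (a*n2+b)) * fB b d * v (c*n2+d)))"
  proof (rule sum.cong[OF refl])
    fix a
    show "(\<Sum>b<n2. \<Sum>c<n1. \<Sum>d<n2. cnj (v (a*n2+b)) * (fA a c * fB b d) * v (c*n2+d)) =
          (\<Sum>c<n1. fA a c * (\<Sum>b<n2. \<Sum>d<n2. cnj (v (a*n2+b)) * fB b d * v (c*n2+d)))"
      by (subst sum.swap) (simp add: sum_distrib_left mult_ac)
  qed
  also have "\<dots> = (\<Sum>a<n1. \<Sum>c<n1. fA a c * (\<Sum>k<m. cnj (w k a) * w k c))"
    unfolding w_def by (intro sum.cong refl) (simp add: gram_sesquilinear[OF u])
  also have "\<dots> = (\<Sum>a<n1. \<Sum>c<n1. \<Sum>k<m. cnj (w k a) * fA a c * w k c)"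
    by (simp add: sum_distrib_left mult_ac)
  also have "\<dots> = (\<Sum>k<m. \<Sum>a<n1. \<Sum>c<n1. cnj (w k a) * fA a c * w k c)"
    by (rule sum_rotate3)
  also have "\<dots> = (\<Sum>k<m. qform n1 fA (w k))" unfolding qform_def ..
  finally have eq: "qform (n1*n2) ?K v = (\<Sum>k<m. qform n1 fA (w k))" .
  have "0 \<le> (\<Sum>k<m. qform n1 fA (w k))"
    using A unfolding psd_kernel_def by (intro sum_nonneg) auto
  then show "0 \<le> qform (n1*n2) ?K v" unfolding eq .
qed


(* Density matrices: closure under Kronecker products and convex combinations. *)

lemma kron_carrier:
  assumes "A \<in> carrier_mat n1 n1" "B \<in> carrier_mat n2 n2"
  shows "kron A B \<in> carrier_mat (n1*n2) (n1*n2)"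
    and "\<And>i j. i < n1*n2 \<Longrightarrow> j < n1*n2 \<Longrightarrow>
          kron A B $$ (i, j) = A $$ (i div n2, j div n2) * B $$ (i mod n2, j mod n2)"
  using assms by (auto simp: kron_def)

lemma psd_kron:
  assumes "psd n1 A" "psd n2 B"
  shows "psd (n1*n2) (kron A B)"
proof -
  have cA: "A \<in> carrier_mat n1 n1" and cB: "B \<in> carrier_mat n2 n2"
    and pA: "psd_kernel n1 (\<lambda>i j. A $$ (i, j))" and pB: "psd_kernel n2 (\<lambda>i j. B $$ (i, j))"
    using assms by (auto simp: psd_iff_kernel)
  have "psd_kernel (n1*n2) (\<lambda>i j. kron A B $$ (i, j))"
    using psd_kernel_kron[OF pA pB] by (subst psd_kernel_cong) (auto simp: kron_carrier(2)[OF cA cB])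
  then show ?thesis using kron_carrier(1)[OF cA cB] by (simp add: psd_iff_kernel)
qed

lemma mtrace_kron:
  assumes "A \<in> carrier_mat n1 n1" "B \<in> carrier_mat n2 n2"
  shows "mtrace (kron A B) = mtrace A * mtrace B"
proof -
  have idx: "a*n2+b < n1*n2" if "a < n1" "b < n2" for a b
  proof -
    have "a*n2+b < Suc a * n2" using that by simp
    also have "\<dots> \<le> n1 * n2" using that by (intro mult_le_mono1) simp
    finally show ?thesis .
  qed
  have "mtrace (kron A B) = (\<Sum>i<n1*n2. kron A B $$ (i, i))"
    using kron_carrier(1)[OF assms] by (simp add: mtrace_def)
  also have "\<dots> = (\<Sum>a<n1. \<Sum>b<n2. A $$ (a, a) * B $$ (b, b))"
    unfolding sum_lessThan_mult by (intro sum.cong refl) (simp add: kron_carrier(2)[OF assms] idx)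
  also have "\<dots> = mtrace A * mtrace B"
    using assms by (simp add: mtrace_def sum_product)
  finally show ?thesis .
qed

lemma density_kron:
  assumes "density n1 A" "density n2 B"
  shows "density (n1*n2) (kron A B)"
  using assms psd_kron mtrace_kron unfolding density_def psd_iff_kernel by (metis mult_1)

lemma density_foldr_kron:
  "length \<rho>s = length ds \<Longrightarrow> (\<forall>k<length ds. density (ds ! k) (\<rho>s ! k)) \<Longrightarrow>
   density (prod_list ds) (foldr kron \<rho>s (1\<^sub>m 1))"
proof (induction ds arbitrary: \<rho>s)
  case Nil
  then show ?case
    by (simp add: density_def psd_iff_kernel psd_kernel_def qform_def mtrace_def less_eq_complex_def)
next
  case (Cons d ds)
  then obtain r rs where rs: "\<rho>s = r # rs" by (cases \<rho>s) auto
  have "density d r" using Cons.prems rs by force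
  moreover have "density (prod_list ds) (foldr kron rs (1\<^sub>m 1))"
    using Cons.IH[of rs] Cons.prems rs by force
  ultimately show ?case using density_kron rs by simp
qed

lemma product_state_density: "product_state dims \<rho> \<Longrightarrow> density (hdim dims) \<rho>"
  unfolding product_state_def hdim_def using density_foldr_kron by blast

lemma density_convex_comb:
  fixes p :: "nat \<Rightarrow> real" and \<sigma> :: "nat \<Rightarrow> complex mat"
  assumes "\<forall>i<m. p i \<ge> 0 \<and> density n (\<sigma> i)" "(\<Sum>i<m. p i) = 1"
  shows "density n (mat n n (\<lambda>(a, b). \<Sum>i<m. complex_of_real (p i) * \<sigma> i $$ (a, b)))"
proof -
  let ?M = "mat n n (\<lambda>(a, b). \<Sum>i<m. complex_of_real (p i) * \<sigma> i $$ (a, b))"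
  have psd_i: "psd_kernel n (\<lambda>a b. \<sigma> i $$ (a, b))" and tr_i: "mtrace (\<sigma> i) = 1"
    and carrier_i: "\<sigma> i \<in> carrier_mat n n" if "i < m" for i
    using assms that by (auto simp: density_def psd_iff_kernel)
  have form: "qform n (\<lambda>a b. ?M $$ (a, b)) v
      = (\<Sum>i<m. complex_of_real (p i) * qform n (\<lambda>a b. \<sigma> i $$ (a, b)) v)" for v
  proof -
    have "qform n (\<lambda>a b. ?M $$ (a, b)) v =
        (\<Sum>a<n. \<Sum>b<n. \<Sum>i<m. complex_of_real (p i) * (cnj (v a) * \<sigma> i $$ (a, b) * v b))"
      unfolding qform_def by (intro sum.cong refl) (simp add: sum_distrib_left sum_distrib_right mult_ac)
    also have "\<dots> = (\<Sum>i<m. \<Sum>a<n. \<Sum>b<n. complex_of_real (p i) * (cnj (v a) * \<sigma> i $$ (a, b) * v b))"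
      by (rule sum_rotate3)
    finally show ?thesis unfolding qform_def by (simp add: sum_distrib_left)
  qed
  have "0 \<le> complex_of_real (p i) * qform n (\<lambda>a b. \<sigma> i $$ (a, b)) v" if "i < m" for i v
    using assms(1) psd_i[OF that] that
    by (intro mult_nonneg_nonneg) (auto simp: psd_kernel_def less_eq_complex_def)
  then have "psd_kernel n (\<lambda>a b. ?M $$ (a, b))"
    unfolding psd_kernel_def form by (auto intro: sum_nonneg)
  moreover have "mtrace ?M = 1"
  proof -
    have "mtrace ?M = (\<Sum>a<n. \<Sum>i<m. complex_of_real (p i) * \<sigma> i $$ (a, a))"
      unfolding mtrace_def by simp
    also have "\<dots> = (\<Sum>i<m. complex_of_real (p i) * mtrace (\<sigma> i))"
      using carrier_i by (subst sum.swap) (auto simp: mtrace_def sum_distrib_left intro!: sum.cong)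
    also have "\<dots> = of_real (\<Sum>i<m. p i)" using tr_i by simp
    finally show ?thesis using assms(2) by simp
  qed
  ultimately show ?thesis unfolding density_def psd_iff_kernel by simp
qed

lemma separable_density:
  assumes "separable dims \<sigma>"
  shows "density (hdim dims) \<sigma>"
proof -
  obtain m :: nat and p :: "nat \<Rightarrow> real" and \<pi> :: "nat \<Rightarrow> complex mat" where
    decomp: "\<forall>i<m. p i \<ge> 0 \<and> product_state dims (\<pi> i)" "(\<Sum>i<m. p i) = 1"
      "\<sigma> = mat (hdim dims) (hdim dims) (\<lambda>(a, b). \<Sum>i<m. complex_of_real (p i) * \<pi> i $$ (a, b))"
    using assms unfolding separable_def by blast
  have "\<forall>i<m. p i \<ge> 0 \<and> density (hdim dims) (\<pi> i)" using decomp(1) product_state_density by blast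
  then show ?thesis using density_convex_comb[OF _ decomp(2)] decomp(3) by simp
qed

lemma density_mix:
  assumes "0 \<le> p" "p \<le> 1" "density n A" "density n B"
  shows "density n (mix p A B)"
proof -
  define q :: "nat \<Rightarrow> real" where "q i = (if i = 0 then p else 1 - p)" for i
  define s :: "nat \<Rightarrow> complex mat" where "s i = (if i = 0 then A else B)" for i
  have "A \<in> carrier_mat n n" "B \<in> carrier_mat n n"
    using assms by (auto simp: density_def psd_iff_kernel)
  then have "mix p A B = mat n n (\<lambda>(a, b). \<Sum>i<2. complex_of_real (q i) * s i $$ (a, b))"
    by (intro eq_matI) (auto simp: mix_def q_def s_def numeral_2_eq_2)
  moreover have "density n (mat n n (\<lambda>(a, b). \<Sum>i<2. complex_of_real (q i) * s i $$ (a, b)))"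
    using assms by (intro density_convex_comb) (auto simp: q_def s_def numeral_2_eq_2)
  ultimately show ?thesis by simp
qed


(* The distance-based entanglement measure. *)

(* Nonnegativity follows from the metric axioms: 0 = D(t,t) <= 2 D(t,s). *)
lemma metric_nonneg:
  assumes "metric_on_states n D" "density n \<tau>" "density n \<sigma>"
  shows "0 \<le> D \<tau> \<sigma>"
  using assms unfolding metric_on_states_def by (smt (verit))

(* Separable states are states, so the distances defining E_D are bounded below. *)
lemma E_D_le:
  assumes "metric_on_states (hdim dims) D" "density (hdim dims) \<tau>" "separable dims \<sigma>"
  shows "E_D dims D \<tau> \<le> D \<tau> \<sigma>"
proof -
  have "bdd_below {D \<tau> \<sigma> | \<sigma>. separable dims \<sigma>}"
    using metric_nonneg[OF assms(1,2)] separable_density by (auto intro!: bdd_belowI[of _ 0])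
  then show ?thesis unfolding E_D_def using assms(3) by (auto intro!: cInf_lower)
qed

(* E_D is 1-Lipschitz from below: E_D(rho) <= E_D(sigma) + D(rho,sigma), using a
   closest separable state to sigma. *)
lemma E_D_triangle:
  assumes "metric_on_states (hdim dims) D"
    and "density (hdim dims) \<rho>" "density (hdim dims) \<sigma>"
    and "separable dims s" "D \<sigma> s = E_D dims D \<sigma>"
  shows "E_D dims D \<rho> \<le> D \<rho> \<sigma> + E_D dims D \<sigma>"
proof -
  have "E_D dims D \<rho> \<le> D \<rho> s" using E_D_le[OF assms(1,2,4)] .
  also have "\<dots> \<le> D \<rho> \<sigma> + D \<sigma> s"
    using assms(1-3) separable_density[OF assms(4)] unfolding metric_on_states_def by blast
  finally show ?thesis using assms(5) by simp
qed

lemma E_D_along_segment: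
  assumes "metric_on_states (hdim dims) D" "convex_each_arg (hdim dims) D"
    and "density (hdim dims) \<rho>" "separable dims s" "D \<rho> s = E_D dims D \<rho>"
    and "0 \<le> t" "t \<le> 1"
  shows "D \<rho> (mix (1 - t) \<rho> s) \<le> t * E_D dims D \<rho>"
    and "E_D dims D (mix (1 - t) \<rho> s) \<le> (1 - t) * E_D dims D \<rho>"
proof -
  have s: "density (hdim dims) s" using separable_density[OF assms(4)] .
  have zero: "D \<tau> \<tau> = 0" if "density (hdim dims) \<tau>" for \<tau>
    using assms(1) that unfolding metric_on_states_def by blast
  have convex: "D (mix (1 - t) \<rho> s) s \<le> (1 - t) * D \<rho> s + t * D s s"
    "D \<rho> (mix (1 - t) \<rho> s) \<le> (1 - t) * D \<rho> \<rho> + t * D \<rho> s"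
    using assms(2)[unfolded convex_each_arg_def, rule_format, of "1 - t" \<rho> s] assms(3,6,7) s
    by auto
  then show "D \<rho> (mix (1 - t) \<rho> s) \<le> t * E_D dims D \<rho>"
    using zero[OF assms(3)] assms(5) by simp
  have "density (hdim dims) (mix (1 - t) \<rho> s)" using assms(3,6,7) s by (intro density_mix) auto
  then have "E_D dims D (mix (1 - t) \<rho> s) \<le> D (mix (1 - t) \<rho> s) s"
    using E_D_le assms(1,4) by blast
  then show "E_D dims D (mix (1 - t) \<rho> s) \<le> (1 - t) * E_D dims D \<rho>"
    using convex zero[OF s] assms(5) by simp
qed

theorem mainTheorem10:
  fixes dims :: "nat list" and D :: "complex mat \<Rightarrow> complex mat \<Rightarrow> real"
    and \<rho> :: "complex mat" and \<epsilon> :: real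
  assumes "\<forall>d \<in> set dims. 0 < d"
    and "metric_on_states (hdim dims) D"
    and "convex_each_arg (hdim dims) D"
    and "contractive (hdim dims) D"
    and "\<forall>\<tau>. density (hdim dims) \<tau> \<longrightarrow>
           (\<exists>\<sigma>. separable dims \<sigma> \<and> D \<tau> \<sigma> = E_D dims D \<tau>)"
    and "density (hdim dims) \<rho>"
    and "0 \<le> \<epsilon>" and "\<epsilon> \<le> E_D dims D \<rho>"
  shows "eps_measure (hdim dims) D (E_D dims D) \<epsilon> \<rho> = E_D dims D \<rho> - \<epsilon>"
proof -
  let ?E = "E_D dims D"
  let ?candidates = "{?E \<sigma> | \<sigma>. density (hdim dims) \<sigma> \<and> D \<rho> \<sigma> \<le> \<epsilon>}"
  have lower: "?E \<rho> - \<epsilon> \<le> ?E \<sigma>" if "density (hdim dims) \<sigma>" "D \<rho> \<sigma> \<le> \<epsilon>" for \<sigma>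
    using E_D_triangle[OF assms(2,6) that(1)] assms(5) that by force
  obtain s where s: "separable dims s" "D \<rho> s = ?E \<rho>" using assms(5,6) by blast
  define t where "t = \<epsilon> / ?E \<rho>"
  have t: "0 \<le> t" "t \<le> 1" "t * ?E \<rho> = \<epsilon>"
    by (cases "?E \<rho> = 0") (use assms(7,8) in \<open>auto simp: t_def divide_le_eq_1\<close>)
  define \<sigma> where "\<sigma> = mix (1 - t) \<rho> s"
  have \<sigma>: "density (hdim dims) \<sigma>" "D \<rho> \<sigma> \<le> \<epsilon>" "?E \<sigma> \<le> ?E \<rho> - \<epsilon>"
    using density_mix[OF _ _ assms(6) separable_density[OF s(1)]] t
      E_D_along_segment[OF assms(2,3,6) s t(1,2)] by (auto simp: \<sigma>_def algebra_simps)
  have "Inf ?candidates = ?E \<rho> - \<epsilon>"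
  proof (rule cInf_eq_minimum)
    show "?E \<rho> - \<epsilon> \<in> ?candidates" using \<sigma> lower[OF \<sigma>(1,2)] by force
  qed (use lower in blast)
  then show ?thesis unfolding eps_measure_def .
qed

end
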